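(* Let $G=(V,E,w)$ be an undirected graph without self-loops, with $n\ge 2$ vertices, positive edge weights and conductance $\Phi_G>0$. Let $\mathcal{T}^*$ be an optimal HC tree of $G$ with dense branch $(A_0,\dots,A_k)$, $k\ge 0$. If $|A_k|\ge (n-1)/2$, then every HC tree $\mathcal{T}$ of $G$ satisfies $\mathrm{cost}_G(\mathcal{T})\le \frac{8}{\Phi_G}\cdot\mathrm{cost}_G(\mathcal{T}^* )$.
   Context: $d_u=\sum_v w_{uv}$, $\mathrm{vol}(S)=\sum_{u\in S}d_u$, $\mathrm{vol}(G)=\mathrm{vol}(V)$; $\Phi_G(S)=w(S,V\setminus S)/\mathrm{vol}(S)$, $\Phi_G=\min\{\Phi_G(S):\emptyset\ne S\subset V,\ \mathrm{vol}(S)\le\mathrm{vol}(V)/2\}$. An HC tree is a rooted binary tree whose leaves are in bijection with $V$, nodes identified with their leaf vertex sets and $|N|$ the number of such vertices; $\mathrm{cost}_G(\mathcal{T})=\sum_{\{u,v\}\in E}w_{uv}|\mathsf{leaves}(\mathcal{T}[u\vee v])|$ with $u\vee v$ the lowest common ancestor. Dense branch: the path $(A_0,\dots,A_k)$ from the root $A_0$ where each $A_{i+1}$ is the child of $A_i$ of larger volume, and $A_k$ has $\mathrm{vol}(A_k)>\mathrm{vol}(G)/2$ while both its children have volume at most $\mathrm{vol}(G)/2$. *)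

theory Defs
  imports Complex_Main
begin

(* Weighted undirected graph without self-loops: finite vertex set V, weight
   function w, symmetric, zero on the diagonal, nonnegative; the edges are the
   pairs {u,v} with w u v > 0 (so all edge weights are positive). *)
definition wgraph :: "'a set \<Rightarrow> ('a \<Rightarrow> 'a \<Rightarrow> real) \<Rightarrow> bool" where
  "wgraph V w \<longleftrightarrow> finite V \<and> (\<forall>u\<in>V. \<forall>v\<in>V. w u v = w v u \<and> w u v \<ge> 0) \<and> (\<forall>u\<in>V. w u u = 0)"

definition deg :: "'a set \<Rightarrow> ('a \<Rightarrow> 'a \<Rightarrow> real) \<Rightarrow> 'a \<Rightarrow> real" where
  "deg V w u = (\<Sum>v\<in>V. w u v)"

definition vol :: "'a set \<Rightarrow> ('a \<Rightarrow> 'a \<Rightarrow> real) \<Rightarrow> 'a set \<Rightarrow> real" where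
  "vol V w S = (\<Sum>u\<in>S. deg V w u)"

definition cut_weight :: "('a \<Rightarrow> 'a \<Rightarrow> real) \<Rightarrow> 'a set \<Rightarrow> 'a set \<Rightarrow> real" where
  "cut_weight w S T = (\<Sum>u\<in>S. \<Sum>v\<in>T. w u v)"

definition cond_set :: "'a set \<Rightarrow> ('a \<Rightarrow> 'a \<Rightarrow> real) \<Rightarrow> 'a set \<Rightarrow> real" where
  "cond_set V w S = cut_weight w S (V - S) / vol V w S"

definition conductance :: "'a set \<Rightarrow> ('a \<Rightarrow> 'a \<Rightarrow> real) \<Rightarrow> real" where
  "conductance V w = Min {cond_set V w S | S. S \<noteq> {} \<and> S \<subset> V \<and> vol V w S \<le> vol V w V / 2}"

datatype 'a hctree = Leaf 'a | Node "'a hctree" "'a hctree"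

fun leaf_list :: "'a hctree \<Rightarrow> 'a list" where
  "leaf_list (Leaf x) = [x]"
| "leaf_list (Node l r) = leaf_list l @ leaf_list r"

definition leaves :: "'a hctree \<Rightarrow> 'a set" where
  "leaves t = set (leaf_list t)"

definition hc_tree :: "'a set \<Rightarrow> 'a hctree \<Rightarrow> bool" where
  "hc_tree V t \<longleftrightarrow> distinct (leaf_list t) \<and> set (leaf_list t) = V"

fun lca_size :: "'a hctree \<Rightarrow> 'a \<Rightarrow> 'a \<Rightarrow> nat" where
  "lca_size (Leaf x) u v = 1"
| "lca_size (Node l r) u v =
     (if u \<in> leaves l \<and> v \<in> leaves l then lca_size l u v
      else if u \<in> leaves r \<and> v \<in> leaves r then lca_size r u v
      else card (leaves (Node l r)))"

(* cost over the undirected edges {u,v}: each unordered pair is counted twice in the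
   double sum over ordered pairs, hence the factor 1/2; non-edges have weight 0 *)
definition hc_cost :: "'a set \<Rightarrow> ('a \<Rightarrow> 'a \<Rightarrow> real) \<Rightarrow> 'a hctree \<Rightarrow> real" where
  "hc_cost V w t = (\<Sum>u\<in>V. \<Sum>v\<in>V. w u v * real (lca_size t u v)) / 2"

definition optimal_hc_tree :: "'a set \<Rightarrow> ('a \<Rightarrow> 'a \<Rightarrow> real) \<Rightarrow> 'a hctree \<Rightarrow> bool" where
  "optimal_hc_tree V w t \<longleftrightarrow> hc_tree V t \<and> (\<forall>t'. hc_tree V t' \<longrightarrow> hc_cost V w t \<le> hc_cost V w t')"

(* Follow the dense branch from a node: move to the child of larger volume as long
   as that child has volume > vol(G)/2; return the last node A_k of the branch. *)
fun dense_end :: "'a set \<Rightarrow> ('a \<Rightarrow> 'a \<Rightarrow> real) \<Rightarrow> 'a hctree \<Rightarrow> 'a hctree" where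
  "dense_end V w (Leaf x) = Leaf x"
| "dense_end V w (Node l r) =
     (let vl = vol V w (leaves l); vr = vol V w (leaves r); h = vol V w V / 2 in
      if vl \<ge> vr then (if vl > h then dense_end V w l else Node l r)
      else (if vr > h then dense_end V w r else Node l r))"

end

theory Submission
  imports Defs
begin

text \<open>Every lowest common ancestor has at most \<open>n\<close> leaves, so any HC tree costs at most
  \<open>n \<cdot> vol(G) / 2\<close>. Conversely, in any HC tree whose
  dense branch ends at \<open>A\<^sub>k\<close> with children \<open>L\<close>, \<open>R\<close>, every edge between \<open>L\<close> and \<open>R\<close>
  or leaving \<open>A\<^sub>k\<close> has its lowest common ancestor at or above \<open>A\<^sub>k\<close>; since \<open>L\<close>, \<open>R\<close> and
  \<open>V - A\<^sub>k\<close> each have at most half the volume, conductance forces these edges to weigh at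
  least \<open>\<Phi> \<cdot> vol(G) / 2\<close>, so the cost is at least \<open>|A\<^sub>k| \<cdot> \<Phi> \<cdot> vol(G) / 2\<close>. With
  \<open>|A\<^sub>k| \<ge> (n - 1) / 2\<close> the two bounds differ by at most \<open>4 / \<Phi>\<close>. If \<open>A\<^sub>k\<close> is a leaf,
  the lower bound still holds since every edge has an ancestor with two leaves, whence
  \<open>cost \<ge> vol(G) \<ge> \<Phi> \<cdot> vol(G)\<close>.\<close>

section \<open>Trees\<close>

lemma leaves_Leaf [simp]: "leaves (Leaf x) = {x}"
  and leaves_Node [simp]: "leaves (Node l r) = leaves l \<union> leaves r"
  by (auto simp: leaves_def)

lemma finite_leaves [simp]: "finite (leaves t)"
  by (simp add: leaves_def)

lemma leaves_nonempty: "leaves t \<noteq> {}"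
  by (induction t) auto

lemma leaves_disjoint_if_distinct:
  "distinct (leaf_list (Node l r)) \<Longrightarrow> leaves l \<inter> leaves r = {}"
  by (auto simp: leaves_def)

lemma lca_size_commute: "lca_size t u v = lca_size t v u"
  by (induction t) auto

lemma lca_size_le_card_leaves: "lca_size t u v \<le> card (leaves t)"
proof (induction t)
  case (Node l r)
  have "card (leaves l) \<le> card (leaves (Node l r))" "card (leaves r) \<le> card (leaves (Node l r))"
    by (auto intro!: card_mono)
  with Node show ?case by auto
qed simp

lemma lca_size_ge_2:
  "u \<in> leaves t \<Longrightarrow> v \<in> leaves t \<Longrightarrow> u \<noteq> v \<Longrightarrow> 2 \<le> lca_size t u v"
proof (induction t)
  case (Node l r)
  have "card {u, v} \<le> card (leaves (Node l r))"
    using Node.prems by (intro card_mono) auto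
  with Node show ?case by auto
qed simp

inductive is_subtree :: "'a hctree \<Rightarrow> 'a hctree \<Rightarrow> bool" where
  refl: "is_subtree t t"
| left: "is_subtree s l \<Longrightarrow> is_subtree s (Node l r)"
| right: "is_subtree s r \<Longrightarrow> is_subtree s (Node l r)"

lemma is_subtree_leaves: "is_subtree s t \<Longrightarrow> leaves s \<subseteq> leaves t"
  by (induction rule: is_subtree.induct) auto

lemma is_subtree_distinct:
  "is_subtree s t \<Longrightarrow> distinct (leaf_list t) \<Longrightarrow> distinct (leaf_list s)"
  by (induction rule: is_subtree.induct) auto

lemma lca_size_subtree_inside:
  assumes "is_subtree s t" "distinct (leaf_list t)" "u \<in> leaves s" "v \<in> leaves s"
  shows "lca_size t u v = lca_size s u v"
  using assms
proof (induction rule: is_subtree.induct)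
  case (left s l r)
  then show ?case using is_subtree_leaves by fastforce
next
  case (right s r l)
  then have "u \<in> leaves r" "v \<in> leaves r" using is_subtree_leaves by blast+
  moreover have "u \<notin> leaves l"
    using calculation leaves_disjoint_if_distinct[OF right.prems(1)] by blast
  ultimately show ?case using right by simp
qed simp

lemma lca_size_subtree_outside:
  assumes "is_subtree s t" "distinct (leaf_list t)" "u \<in> leaves s" "v \<in> leaves t - leaves s"
  shows "card (leaves s) \<le> lca_size t u v"
  using assms
proof (induction rule: is_subtree.induct)
  case (left s l r)
  have "u \<in> leaves l" using left is_subtree_leaves by blast
  moreover have "u \<notin> leaves r" using calculation leaves_disjoint_if_distinct[OF left.prems(1)] by blast
  moreover have "card (leaves s) \<le> card (leaves (Node l r))"
    using is_subtree_leaves[OF left.hyps] by (intro card_mono) auto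
  ultimately show ?case using left by auto
next
  case (right s r l)
  have "u \<in> leaves r" using right is_subtree_leaves by blast
  moreover have "u \<notin> leaves l" using calculation leaves_disjoint_if_distinct[OF right.prems(1)] by blast
  moreover have "card (leaves s) \<le> card (leaves (Node l r))"
    using is_subtree_leaves[OF right.hyps] by (intro card_mono) auto
  ultimately show ?case using right by auto
qed simp

lemma lca_size_ge_card_subtree:
  assumes s: "is_subtree (Node l r) t" and dist: "distinct (leaf_list t)"
    and u: "u \<in> leaves (Node l r)" and v: "v \<in> leaves t"
    and split: "\<not> (u \<in> leaves l \<and> v \<in> leaves l)" "\<not> (u \<in> leaves r \<and> v \<in> leaves r)"
  shows "card (leaves (Node l r)) \<le> lca_size t u v"
proof (cases "v \<in> leaves (Node l r)")
  case True
  then have "lca_size t u v = lca_size (Node l r) u v"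
    using u by (intro lca_size_subtree_inside[OF s dist])
  with split show ?thesis by auto
qed (use lca_size_subtree_outside[OF s dist u] v in auto)

lemma is_subtree_dense_end: "is_subtree (dense_end V w t) t"
  by (induction t) (auto simp: Let_def intro: is_subtree.intros)

lemma dense_end_Node:
  assumes "dense_end V w t = Node l r"
  shows "vol V w (leaves l) \<le> vol V w V / 2" "vol V w (leaves r) \<le> vol V w V / 2"
    and "leaves (Node l r) = leaves t \<or> vol V w (leaves (Node l r)) > vol V w V / 2"
  using assms
  by (induction t arbitrary: l r) (auto simp: Let_def split: if_splits)

section \<open>Cuts, volumes and conductance\<close>

lemma cut_weight_eq_sum_product: "cut_weight w S T = (\<Sum>(u, v)\<in>S \<times> T. w u v)"
  by (simp add: cut_weight_def sum.cartesian_product)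

lemma cut_weight_Un_left:
  "finite A \<Longrightarrow> finite B \<Longrightarrow> A \<inter> B = {} \<Longrightarrow>
    cut_weight w (A \<union> B) T = cut_weight w A T + cut_weight w B T"
  by (simp add: cut_weight_def sum.union_disjoint)

lemma cut_weight_Un_right:
  "finite A \<Longrightarrow> finite B \<Longrightarrow> A \<inter> B = {} \<Longrightarrow>
    cut_weight w S (A \<union> B) = cut_weight w S A + cut_weight w S B"
  by (simp add: cut_weight_def sum.union_disjoint sum.distrib)

lemma cut_weight_commute:
  assumes "wgraph V w" "S \<subseteq> V" "T \<subseteq> V"
  shows "cut_weight w S T = cut_weight w T S"
proof -
  have "w u v = w v u" if "u \<in> S" "v \<in> T" for u v
    using assms that by (auto simp: wgraph_def)
  then show ?thesis
    unfolding cut_weight_def by (subst sum.swap) (auto intro: sum.cong)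
qed

lemma vol_Un:
  "finite A \<Longrightarrow> finite B \<Longrightarrow> A \<inter> B = {} \<Longrightarrow> vol V w (A \<union> B) = vol V w A + vol V w B"
  by (simp add: vol_def sum.union_disjoint)

lemma vol_eq_sum_product: "vol V w V = (\<Sum>(u, v)\<in>V \<times> V. w u v)"
  by (simp add: vol_def deg_def sum.cartesian_product)

lemma deg_nonneg: "wgraph V w \<Longrightarrow> u \<in> V \<Longrightarrow> 0 \<le> deg V w u"
  unfolding deg_def wgraph_def by (auto intro: sum_nonneg)

lemma vol_nonneg: "wgraph V w \<Longrightarrow> S \<subseteq> V \<Longrightarrow> 0 \<le> vol V w S"
  unfolding vol_def using deg_nonneg by (meson subsetD sum_nonneg)

lemma conductance_le_cond_set:
  assumes "finite V" "S \<noteq> {}" "S \<subset> V" "vol V w S \<le> vol V w V / 2"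
  shows "conductance V w \<le> cond_set V w S"
proof -
  have "{cond_set V w S |S. S \<noteq> {} \<and> S \<subset> V \<and> vol V w S \<le> vol V w V / 2}
      \<subseteq> cond_set V w ` Pow V"
    by auto
  then have "finite {cond_set V w S |S. S \<noteq> {} \<and> S \<subset> V \<and> vol V w S \<le> vol V w V / 2}"
    using assms(1) by (meson finite_Pow_iff finite_imageI finite_subset)
  then show ?thesis
    unfolding conductance_def using assms by (intro Min_le) auto
qed

text \<open>Positivity of the conductance rules out the junk value \<open>x / 0 = 0\<close> in \<open>cond_set\<close>.\<close>

lemma conductance_mult_vol_le_cut_weight:
  assumes "wgraph V w" "conductance V w > 0" "S \<noteq> {}" "S \<subset> V" "vol V w S \<le> vol V w V / 2"
  shows "conductance V w * vol V w S \<le> cut_weight w S (V - S)"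
proof -
  have le: "conductance V w \<le> cond_set V w S"
    using assms by (intro conductance_le_cond_set) (auto simp: wgraph_def)
  have "vol V w S \<noteq> 0"
    using le assms(2) by (auto simp: cond_set_def)
  moreover have "0 \<le> vol V w S"
    using assms by (intro vol_nonneg) auto
  ultimately show ?thesis
    using le by (simp add: cond_set_def pos_le_divide_eq)
qed

lemma conductance_le_1:
  assumes g: "wgraph V w" and n: "card V \<ge> 2"
  shows "conductance V w \<le> 1"
proof -
  have fin: "finite V" using g by (simp add: wgraph_def)
  obtain a b where ab: "a \<in> V" "b \<in> V" "a \<noteq> b"
    using n fin card_le_Suc0_iff_eq[of V] by fastforce
  define u where "u = (if deg V w a \<le> deg V w b then a else b)"
  have u: "u \<in> V" "{u} \<subset> V" using ab by (auto simp: u_def)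
  have "deg V w a + deg V w b = (\<Sum>x\<in>{a, b}. deg V w x)"
    using ab by simp
  also have "\<dots> \<le> vol V w V"
    unfolding vol_def using ab fin deg_nonneg[OF g] by (intro sum_mono2) auto
  finally have vol_u: "vol V w {u} \<le> vol V w V / 2"
    by (auto simp: vol_def u_def)
  have "cut_weight w {u} (V - {u}) \<le> deg V w u"
    unfolding cut_weight_def deg_def using g u fin
    by simp (intro sum_mono2, auto simp: wgraph_def)
  then have "cond_set V w {u} \<le> 1"
    using deg_nonneg[OF g u(1)] by (auto simp: cond_set_def vol_def divide_le_eq_1)
  moreover have "conductance V w \<le> cond_set V w {u}"
    using fin u vol_u by (intro conductance_le_cond_set) auto
  ultimately show ?thesis by linarith
qed

text \<open>Each of \<open>L\<close>, \<open>R\<close> and \<open>V - (L \<union> R)\<close> has at most half the volume, so conductance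
  bounds their boundaries; every edge of those boundaries crosses the split \<open>L | R\<close> or
  leaves \<open>L \<union> R\<close>, and is counted at most twice.\<close>

lemma conductance_mult_vol_le_split_cut:
  assumes g: "wgraph V w" and pos: "conductance V w > 0"
    and L: "L \<noteq> {}" and R: "R \<noteq> {}" and LR: "L \<inter> R = {}" "L \<union> R \<subseteq> V"
    and vol_L: "vol V w L \<le> vol V w V / 2" and vol_R: "vol V w R \<le> vol V w V / 2"
    and dense: "L \<union> R = V \<or> vol V w (L \<union> R) > vol V w V / 2"
  shows "conductance V w * vol V w V
    \<le> 2 * (cut_weight w L R + cut_weight w (L \<union> R) (V - (L \<union> R)))"
proof -
  define A where "A = L \<union> R"
  define C where "C = V - A"
  have fin: "finite L" "finite R" "finite C"
    using g LR by (auto simp: wgraph_def C_def intro: finite_subset)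
  have sub: "L \<subseteq> V" "R \<subseteq> V" "C \<subseteq> V" "A \<subseteq> V"
    using LR by (auto simp: A_def C_def)
  have proper: "L \<subset> V" "R \<subset> V"
    using L R LR by auto
  have disj: "L \<inter> C = {}" "R \<inter> C = {}"
    by (auto simp: C_def A_def)
  have "V = A \<union> C" "A \<inter> C = {}" using sub by (auto simp: C_def)
  then have vol_AC: "vol V w V = vol V w A + vol V w C"
    using fin by (metis vol_Un A_def finite_Un)
  then have vol_V: "vol V w V = vol V w L + vol V w R + vol V w C"
    using fin LR by (simp add: A_def vol_Un)
  have "conductance V w * vol V w L \<le> cut_weight w L (V - L)"
    using g pos L proper(1) vol_L by (rule conductance_mult_vol_le_cut_weight)
  also have "V - L = R \<union> C" using LR by (auto simp: C_def A_def)
  finally have cut_L: "conductance V w * vol V w L \<le> cut_weight w L R + cut_weight w L C"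
    using fin disj by (simp add: cut_weight_Un_right)
  have "conductance V w * vol V w R \<le> cut_weight w R (V - R)"
    using g pos R proper(2) vol_R by (rule conductance_mult_vol_le_cut_weight)
  also have "V - R = L \<union> C" using LR by (auto simp: C_def A_def)
  finally have cut_R: "conductance V w * vol V w R \<le> cut_weight w L R + cut_weight w R C"
    using fin disj cut_weight_commute[OF g sub(1,2)] by (simp add: cut_weight_Un_right)
  have cut_C: "conductance V w * vol V w C \<le> cut_weight w A C"
  proof (cases "C = {}")
    case False
    then have "A \<noteq> V" by (simp add: C_def)
    then have "vol V w C \<le> vol V w V / 2"
      using dense vol_AC by (simp add: A_def)
    moreover have "C \<subset> V" using L sub(4) by (auto simp: C_def A_def)
    ultimately have "conductance V w * vol V w C \<le> cut_weight w C (V - C)"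
      using g pos False by (intro conductance_mult_vol_le_cut_weight)
    also have "V - C = A" using sub(4) by (auto simp: C_def)
    finally show ?thesis
      using cut_weight_commute[OF g sub(3,4)] by simp
  qed (simp add: vol_def cut_weight_def)
  have "cut_weight w A C = cut_weight w L C + cut_weight w R C"
    using fin LR by (simp add: A_def cut_weight_Un_left)
  with vol_V cut_L cut_R cut_C
  have "conductance V w * vol V w V \<le> 2 * (cut_weight w L R + cut_weight w A C)"
    by (simp add: algebra_simps)
  then show ?thesis by (simp add: A_def C_def)
qed

section \<open>Cost bounds\<close>

lemma hc_cost_eq_sum_product:
  "hc_cost V w t = (\<Sum>(u, v)\<in>V \<times> V. w u v * lca_size t u v) / 2"
  by (simp add: hc_cost_def sum.cartesian_product)

lemma hc_cost_le_card_mult_vol: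
  assumes g: "wgraph V w" and t: "hc_tree V t"
  shows "2 * hc_cost V w t \<le> card V * vol V w V"
proof -
  have pointwise: "w u v * lca_size t u v \<le> card V * w u v" if "u \<in> V" "v \<in> V" for u v
  proof -
    have "real (lca_size t u v) \<le> card V"
      using t lca_size_le_card_leaves[of t u v] by (simp add: hc_tree_def leaves_def)
    moreover have "0 \<le> w u v" using that g by (simp add: wgraph_def)
    ultimately show ?thesis
      by (metis mult.commute mult_right_mono)
  qed
  have "2 * hc_cost V w t = (\<Sum>(u, v)\<in>V \<times> V. w u v * lca_size t u v)"
    by (simp add: hc_cost_eq_sum_product)
  also have "\<dots> \<le> (\<Sum>(u, v)\<in>V \<times> V. card V * w u v)"
    by (intro sum_mono) (use pointwise in auto)
  also have "\<dots> = card V * vol V w V"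
    by (simp add: vol_eq_sum_product sum_distrib_left case_prod_unfold)
  finally show ?thesis .
qed

lemma vol_le_hc_cost:
  assumes g: "wgraph V w" and t: "hc_tree V t"
  shows "vol V w V \<le> hc_cost V w t"
proof -
  have pointwise: "2 * w u v \<le> w u v * lca_size t u v" if "u \<in> V" "v \<in> V" for u v
  proof (cases "u = v")
    case False
    then have "2 \<le> real (lca_size t u v)"
      using t that lca_size_ge_2[of u t v] by (simp add: hc_tree_def leaves_def)
    moreover have "0 \<le> w u v" using that g by (simp add: wgraph_def)
    ultimately show ?thesis
      by (metis mult.commute mult_right_mono)
  qed (use that g in \<open>simp add: wgraph_def\<close>)
  have "2 * vol V w V = (\<Sum>(u, v)\<in>V \<times> V. 2 * w u v)"
    by (simp add: vol_eq_sum_product sum_distrib_left case_prod_unfold)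
  also have "\<dots> \<le> (\<Sum>(u, v)\<in>V \<times> V. w u v * lca_size t u v)"
    by (intro sum_mono) (use pointwise in auto)
  also have "\<dots> = 2 * hc_cost V w t"
    by (simp add: hc_cost_eq_sum_product)
  finally show ?thesis by simp
qed

lemma weight_mult_le_hc_cost:
  assumes g: "wgraph V w" and X: "X \<subseteq> V \<times> V"
    and lca: "\<And>u v. (u, v) \<in> X \<Longrightarrow> k \<le> lca_size t u v"
  shows "k * (\<Sum>(u, v)\<in>X. w u v) \<le> 2 * hc_cost V w t"
proof -
  have pointwise: "k * w u v \<le> w u v * lca_size t u v" if "(u, v) \<in> X" for u v
  proof -
    have "0 \<le> w u v" using that X g by (auto simp: wgraph_def)
    with lca[OF that] show ?thesis by (metis mult.commute mult_right_mono of_nat_mono)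
  qed
  have "k * (\<Sum>(u, v)\<in>X. w u v) = (\<Sum>(u, v)\<in>X. k * w u v)"
    by (simp add: sum_distrib_left case_prod_unfold)
  also have "\<dots> \<le> (\<Sum>(u, v)\<in>X. w u v * lca_size t u v)"
    by (intro sum_mono) (use pointwise in auto)
  also have "\<dots> \<le> (\<Sum>(u, v)\<in>V \<times> V. w u v * lca_size t u v)"
    using X g by (intro sum_mono2) (auto simp: wgraph_def)
  also have "\<dots> = 2 * hc_cost V w t"
    by (simp add: hc_cost_eq_sum_product)
  finally show ?thesis .
qed

lemma subtree_cut_le_hc_cost:
  assumes g: "wgraph V w" and t: "hc_tree V t" and s: "is_subtree (Node l r) t"
  shows "card (leaves (Node l r)) * (cut_weight w (leaves l) (leaves r)
      + cut_weight w (leaves (Node l r)) (V - leaves (Node l r))) \<le> hc_cost V w t"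
proof -
  define L R A C where "L = leaves l" "R = leaves r" "A = leaves (Node l r)" "C = V - A"
  have dist: "distinct (leaf_list t)" and leaves_t: "leaves t = V"
    using t by (auto simp: hc_tree_def leaves_def)
  have LR: "L \<inter> R = {}"
    using is_subtree_distinct[OF s dist] leaves_disjoint_if_distinct by (simp add: L_R_A_C_def)
  have A: "A = L \<union> R" "A \<subseteq> V" "A \<inter> C = {}"
    using is_subtree_leaves[OF s] leaves_t by (auto simp: L_R_A_C_def)
  have fin: "finite L" "finite R" "finite A" "finite C"
    using g A by (auto simp: wgraph_def L_R_A_C_def)
  define X where "X = L \<times> R \<union> R \<times> L \<union> A \<times> C \<union> C \<times> A"
  have lca_ge: "card A \<le> lca_size t u v" if "(u, v) \<in> L \<times> R \<union> A \<times> C" for u v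
  proof -
    have "card (leaves (Node l r)) \<le> lca_size t u v"
      using that LR leaves_t is_subtree_leaves[OF s]
      by (intro lca_size_ge_card_subtree[OF s dist]) (auto simp: L_R_A_C_def)
    then show ?thesis by (simp only: L_R_A_C_def)
  qed
  have "card A * (\<Sum>(u, v)\<in>X. w u v) \<le> 2 * hc_cost V w t"
  proof (rule weight_mult_le_hc_cost[OF g])
    show "X \<subseteq> V \<times> V" using A by (auto simp: X_def L_R_A_C_def)
    show "card A \<le> lca_size t u v" if "(u, v) \<in> X" for u v
      using that lca_ge[of u v] lca_ge[of v u] lca_size_commute[of t v u] by (auto simp: X_def)
  qed
  moreover have "(\<Sum>(u, v)\<in>X. w u v)
      = cut_weight w L R + cut_weight w R L + cut_weight w A C + cut_weight w C A"
  proof -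
    have "L \<times> R \<inter> R \<times> L = {}" "(L \<times> R \<union> R \<times> L) \<inter> A \<times> C = {}"
        "(L \<times> R \<union> R \<times> L \<union> A \<times> C) \<inter> C \<times> A = {}"
      using LR A by blast+
    then show ?thesis
      unfolding X_def cut_weight_eq_sum_product using fin by (simp add: sum.union_disjoint)
  qed
  moreover have "cut_weight w R L = cut_weight w L R" "cut_weight w C A = cut_weight w A C"
    using A cut_weight_commute[OF g] by (auto simp: L_R_A_C_def)
  ultimately show ?thesis
    by (simp add: L_R_A_C_def algebra_simps)
qed

lemma conductance_dense_end_le_hc_cost:
  assumes g: "wgraph V w" and n: "card V \<ge> 2" and pos: "conductance V w > 0"
    and t: "hc_tree V t"
  shows "conductance V w * card (leaves (dense_end V w t)) * vol V w V \<le> 2 * hc_cost V w t"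
proof (cases "dense_end V w t")
  case (Leaf x)
  have "conductance V w * vol V w V \<le> vol V w V"
    using conductance_le_1[OF g n] vol_nonneg[OF g] pos by (simp add: mult_left_le_one_le)
  also have "\<dots> \<le> 2 * hc_cost V w t"
    using vol_le_hc_cost[OF g t] vol_nonneg[OF g subset_refl] by linarith
  finally show ?thesis
    using Leaf by simp
next
  case (Node l r)
  have s: "is_subtree (Node l r) t"
    using is_subtree_dense_end[of V w t] Node by simp
  have leaves_t: "leaves t = V" and dist: "distinct (leaf_list (Node l r))"
    using t is_subtree_distinct[OF s] by (auto simp: hc_tree_def leaves_def)
  have "conductance V w * vol V w V \<le> 2 * (cut_weight w (leaves l) (leaves r)
      + cut_weight w (leaves l \<union> leaves r) (V - (leaves l \<union> leaves r)))"
    using dense_end_Node[OF Node] is_subtree_leaves[OF s] leaves_t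
    by (intro conductance_mult_vol_le_split_cut[OF g pos leaves_nonempty leaves_nonempty
        leaves_disjoint_if_distinct[OF dist]]) auto
  then have "card (leaves (Node l r)) * (conductance V w * vol V w V)
      \<le> card (leaves (Node l r)) * (2 * (cut_weight w (leaves l) (leaves r)
        + cut_weight w (leaves l \<union> leaves r) (V - (leaves l \<union> leaves r))))"
    by (intro mult_left_mono) auto
  also have "\<dots> \<le> 2 * hc_cost V w t"
    using subtree_cut_le_hc_cost[OF g t s] by (simp add: algebra_simps)
  finally show ?thesis
    using Node by (simp add: algebra_simps)
qed

theorem mainTheorem5:
  fixes V :: "'a set" and w :: "'a \<Rightarrow> 'a \<Rightarrow> real" and Topt T :: "'a hctree"
  assumes "wgraph V w"
    and "card V \<ge> 2"
    and "conductance V w > 0"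
    and "optimal_hc_tree V w Topt"
    and "real (card (leaves (dense_end V w Topt))) \<ge> (real (card V) - 1) / 2"
    and "hc_tree V T"
  shows "hc_cost V w T \<le> 8 / conductance V w * hc_cost V w Topt"
proof -
  define \<Phi> n m S where defs: "\<Phi> = conductance V w" "n = real (card V)"
    "m = real (card (leaves (dense_end V w Topt)))" "S = vol V w V"
  have "hc_tree V Topt"
    using assms(4) by (simp add: optimal_hc_tree_def)
  then have lower: "\<Phi> * m * S \<le> 2 * hc_cost V w Topt"
    using conductance_dense_end_le_hc_cost[OF assms(1-3)] by (simp add: defs)
  have "\<Phi> > 0" "S \<ge> 0" "n \<ge> 2" "m \<ge> (n - 1) / 2"
    using assms(2,3,5) vol_nonneg[OF assms(1)] by (auto simp: defs)
  have "hc_cost V w T \<le> 2 * hc_cost V w T"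
    using vol_le_hc_cost[OF assms(1,6)] \<open>S \<ge> 0\<close> by (simp add: defs)
  also have "\<dots> \<le> n * S"
    using hc_cost_le_card_mult_vol[OF assms(1,6)] by (simp add: defs)
  also have "\<dots> \<le> 4 * m * S"
    using \<open>S \<ge> 0\<close> \<open>n \<ge> 2\<close> \<open>m \<ge> (n - 1) / 2\<close> by (intro mult_right_mono) auto
  also have "\<dots> = 4 / \<Phi> * (\<Phi> * m * S)"
    using \<open>\<Phi> > 0\<close> by simp
  also have "\<dots> \<le> 4 / \<Phi> * (2 * hc_cost V w Topt)"
    using lower \<open>\<Phi> > 0\<close> by (intro mult_left_mono) auto
  finally show ?thesis
    by (simp add: defs)
qed

end
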